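(* In objective type theory (defined in the context below), every derivable judgement (of any of the forms $\vdash \Gamma\ \mathrm{Ctxt}$, $\Gamma \vdash \sigma \in \mathrm{Type}$, $\Gamma \vdash a \in \sigma$) has a unique derivation.
   Context: Objective type theory is the following formal system. It has three judgement forms: $\vdash \Gamma\ \mathrm{Ctxt}$, $\Gamma \vdash \sigma \in \mathrm{Type}$, $\Gamma \vdash a \in \sigma$, where a context is a list $[x_1 \in \sigma_1, \ldots, x_n \in \sigma_n]$ of distinct variables with types. Expressions are considered up to $\alpha$-equivalence (e.g. via de Bruijn indices), and $\equiv$ denotes this syntactic equality; $[t/x]$ denotes capture-avoiding substitution and $[x_1,\ldots,x_n]t$ denotes binding of the $x_i$ in $t$. There is NO definitional (judgemental) equality and no conversion rule. The rules are exactly: $\vdash []\ \mathrm{Ctxt}$; from $\vdash \Gamma\ \mathrm{Ctxt}$, $\Gamma \vdash \sigma \in \mathrm{Type}$ and $x$ fresh infer $\vdash [\Gamma, x \in \sigma]\ \mathrm{Ctxt}$; from $\vdash [\Gamma, x\in\sigma, \Delta]\ \mathrm{Ctxt}$ infer $\Gamma, x \in \sigma, \Delta \vdash x \in \sigma$. $\Pi$-types: from $\Gamma \vdash A \in \mathrm{Type}$ and $\Gamma, x\in A \vdash B \in \mathrm{Type}$ infer $\Gamma \vdash \Pi(A,[x]B) \in \mathrm{Type}$; from $\Gamma, x \in A \vdash t \in B$ infer $\Gamma \vdash \lambda(A,[x]B,[x]t) \in \Pi(A,[x]B)$; from $\Gamma \vdash f \in \Pi(A,[x]B)$ and $\Gamma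 \vdash a \in A$ infer $\Gamma \vdash \mathbf{app}(A,[x]B,f,a) \in B[a/x]$; from $\Gamma, x\in A \vdash t \in B$ and $\Gamma \vdash a \in A$ infer $\Gamma \vdash \mathbf{betaconv}(A,[x]B,a,[x]t) \in \mathbf{app}(A,[x]B,\lambda(A,[x]B,[x]t),a) =_{B[a/x]} t[a/x]$. Identity types: from $\Gamma \vdash a \in A$ and $\Gamma \vdash b \in A$ infer $\Gamma \vdash a =_A b \in \mathrm{Type}$; from $\Gamma \vdash a \in A$ infer $\Gamma \vdash \mathbf{refl}(A,a) \in a =_A a$; from $\Gamma, x\in A, y \in A, u \in x =_A y \vdash P \in \mathrm{Type}$, $\Gamma \vdash p \in a =_A b$ and $\Gamma, x \in A \vdash d \in P[x,x,\mathbf{refl}(A,x)/x,y,u]$ infer $\Gamma \vdash \mathbf{idrec}(A,[x,y,u]P,a,b,p,[x]d) \in P[a,b,p/x,y,u]$; from $\Gamma, x\in A, y \in A, u \in x =_A y \vdash P \in \mathrm{Type}$, $\Gamma \vdash a \in A$ and $\Gamma, x \in A \vdash d \in P[x,x,\mathbf{refl}(A,x)/x,y,u]$ infer $\Gamma \vdash \mathbf{idconv}(A,[x,y,u]P,a,[x]d) \in \mathbf{idrec}(A,[x,y,u]P,a,a,\mathbf{refl}(A,a),[x]d) =_{P[a,a,\mathbf{refl}(A,a)/x,y,u]} d[a/x]$. *)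

theory Defs
  imports Main
begin

text \<open>Binding conventions: in Pi A B, B is under one binder; in Lam A B t, both B and t
are under one binder; in App A B f a and Betaconv A B a t, B (and t) are under one binder;
in Idrec A P a b p d and Idconv A P a d, P is under three binders (x, y, u with u = index 0,
y = index 1, x = index 2) and d is under one binder.\<close>

datatype expr =
    Var nat
  | Pi expr expr
  | Lam expr expr expr
  | App expr expr expr expr
  | Betaconv expr expr expr expr
  | Id expr expr expr
  | Refl expr expr
  | Idrec expr expr expr expr expr expr
  | Idconv expr expr expr expr

definition upr :: "(nat \<Rightarrow> nat) \<Rightarrow> nat \<Rightarrow> nat" where
  "upr r = (\<lambda>n. case n of 0 \<Rightarrow> 0 | Suc m \<Rightarrow> Suc (r m))"

fun ren :: "(nat \<Rightarrow> nat) \<Rightarrow> expr \<Rightarrow> expr" where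
  "ren r (Var n) = Var (r n)"
| "ren r (Pi A B) = Pi (ren r A) (ren (upr r) B)"
| "ren r (Lam A B t) = Lam (ren r A) (ren (upr r) B) (ren (upr r) t)"
| "ren r (App A B f a) = App (ren r A) (ren (upr r) B) (ren r f) (ren r a)"
| "ren r (Betaconv A B a t) = Betaconv (ren r A) (ren (upr r) B) (ren r a) (ren (upr r) t)"
| "ren r (Id A a b) = Id (ren r A) (ren r a) (ren r b)"
| "ren r (Refl A a) = Refl (ren r A) (ren r a)"
| "ren r (Idrec A P a b p d) =
     Idrec (ren r A) (ren (upr (upr (upr r))) P) (ren r a) (ren r b) (ren r p) (ren (upr r) d)"
| "ren r (Idconv A P a d) =
     Idconv (ren r A) (ren (upr (upr (upr r))) P) (ren r a) (ren (upr r) d)"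

definition lift :: "nat \<Rightarrow> expr \<Rightarrow> expr" where
  "lift k e = ren (\<lambda>n. n + k) e"

definition ups :: "(nat \<Rightarrow> expr) \<Rightarrow> nat \<Rightarrow> expr" where
  "ups \<sigma> = (\<lambda>n. case n of 0 \<Rightarrow> Var 0 | Suc m \<Rightarrow> ren Suc (\<sigma> m))"

fun psubst :: "(nat \<Rightarrow> expr) \<Rightarrow> expr \<Rightarrow> expr" where
  "psubst \<sigma> (Var n) = \<sigma> n"
| "psubst \<sigma> (Pi A B) = Pi (psubst \<sigma> A) (psubst (ups \<sigma>) B)"
| "psubst \<sigma> (Lam A B t) = Lam (psubst \<sigma> A) (psubst (ups \<sigma>) B) (psubst (ups \<sigma>) t)"
| "psubst \<sigma> (App A B f a) = App (psubst \<sigma> A) (psubst (ups \<sigma>) B) (psubst \<sigma> f) (psubst \<sigma> a)"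
| "psubst \<sigma> (Betaconv A B a t) =
     Betaconv (psubst \<sigma> A) (psubst (ups \<sigma>) B) (psubst \<sigma> a) (psubst (ups \<sigma>) t)"
| "psubst \<sigma> (Id A a b) = Id (psubst \<sigma> A) (psubst \<sigma> a) (psubst \<sigma> b)"
| "psubst \<sigma> (Refl A a) = Refl (psubst \<sigma> A) (psubst \<sigma> a)"
| "psubst \<sigma> (Idrec A P a b p d) =
     Idrec (psubst \<sigma> A) (psubst (ups (ups (ups \<sigma>))) P) (psubst \<sigma> a) (psubst \<sigma> b)
           (psubst \<sigma> p) (psubst (ups \<sigma>) d)"
| "psubst \<sigma> (Idconv A P a d) =
     Idconv (psubst \<sigma> A) (psubst (ups (ups (ups \<sigma>))) P) (psubst \<sigma> a) (psubst (ups \<sigma>) d)"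

definition scons :: "expr \<Rightarrow> (nat \<Rightarrow> expr) \<Rightarrow> nat \<Rightarrow> expr" where
  "scons a \<sigma> = (\<lambda>n. case n of 0 \<Rightarrow> a | Suc m \<Rightarrow> \<sigma> m)"

definition subst1 :: "expr \<Rightarrow> expr \<Rightarrow> expr" where
  "subst1 a B = psubst (scons a Var) B"

text \<open>P[a,b,p/x,y,u] for P under binders x, y, u (u innermost).\<close>
definition subst3 :: "expr \<Rightarrow> expr \<Rightarrow> expr \<Rightarrow> expr \<Rightarrow> expr" where
  "subst3 a b p P = psubst (scons p (scons b (scons a Var))) P"

text \<open>P[x,x,refl(A,x)/x,y,u], living in context Gamma, x : A.\<close>
definition diag :: "expr \<Rightarrow> expr \<Rightarrow> expr" where
  "diag A P = psubst (scons (Refl (lift 1 A) (Var 0)) (scons (Var 0) (scons (Var 0) (\<lambda>n. Var (Suc n))))) P"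

text \<open>Context of P: Gamma, x : A, y : A, u : x =_A y.\<close>
definition idctx :: "expr \<Rightarrow> expr list \<Rightarrow> expr list" where
  "idctx A G = Id (lift 2 A) (Var 1) (Var 0) # lift 1 A # A # G"

text \<open>Contexts are lists with the most recently added variable at the head (index 0);
each entry is a type in the context formed by the entries after it.\<close>

datatype judg =
    JCtxt "expr list"
  | JType "expr list" expr
  | JTerm "expr list" expr expr

datatype rule_name =
  RNil | RExt | RVar | RPi | RLam | RApp | RBeta | RId | RRefl | RIdrec | RIdconv

inductive rule_inst :: "rule_name \<Rightarrow> judg list \<Rightarrow> judg \<Rightarrow> bool" where
  nil: "rule_inst RNil [] (JCtxt [])"
| ext: "rule_inst RExt [JCtxt G, JType G A] (JCtxt (A # G))"
| var: "rule_inst RVar [JCtxt (D @ A # G)]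
          (JTerm (D @ A # G) (Var (length D)) (lift (Suc (length D)) A))"
| pi: "rule_inst RPi [JType G A, JType (A # G) B] (JType G (Pi A B))"
| lam: "rule_inst RLam [JTerm (A # G) t B] (JTerm G (Lam A B t) (Pi A B))"
| app: "rule_inst RApp [JTerm G f (Pi A B), JTerm G a A] (JTerm G (App A B f a) (subst1 a B))"
| beta: "rule_inst RBeta [JTerm (A # G) t B, JTerm G a A]
          (JTerm G (Betaconv A B a t)
             (Id (subst1 a B) (App A B (Lam A B t) a) (subst1 a t)))"
| idty: "rule_inst RId [JTerm G a A, JTerm G b A] (JType G (Id A a b))"
| refl: "rule_inst RRefl [JTerm G a A] (JTerm G (Refl A a) (Id A a a))"
| idrec: "rule_inst RIdrec [JType (idctx A G) P, JTerm G p (Id A a b), JTerm (A # G) d (diag A P)]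
          (JTerm G (Idrec A P a b p d) (subst3 a b p P))"
| idconv: "rule_inst RIdconv [JType (idctx A G) P, JTerm G a A, JTerm (A # G) d (diag A P)]
          (JTerm G (Idconv A P a d)
             (Id (subst3 a a (Refl A a) P) (Idrec A P a a (Refl A a) d) (subst1 a d)))"

datatype deriv = Der rule_name judg "deriv list"

fun concl :: "deriv \<Rightarrow> judg" where
  "concl (Der r j ds) = j"

inductive valid :: "deriv \<Rightarrow> bool" where
  "rule_inst r (map concl ds) j \<Longrightarrow> (\<forall>d\<in>set ds. valid d) \<Longrightarrow> valid (Der r j ds)"

definition derivable :: "judg \<Rightarrow> bool" where
  "derivable J \<longleftrightarrow> (\<exists>d. valid d \<and> concl d = J)"

end

theory Submission
  imports Defs
begin

text \<open>Every rule of objective type theory is syntax-directed: without a conversion rule,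
the conclusion of a rule instance, with all its type annotations, determines the rule and
its premises.\<close>

lemma rule_inst_determined:
  assumes "rule_inst r ps j" and "rule_inst r' ps' j"
  shows "r' = r \<and> ps' = ps"
  using assms by (induction rule: rule_inst.induct) (auto elim: rule_inst.cases)

lemma valid_unique_by_concl:
  assumes "valid d" and "valid d'" and "concl d' = concl d"
  shows "d' = d"
  using assms
proof (induction d arbitrary: d' rule: valid.induct)
  case (1 r ds j)
  then obtain r' ds' where d': "d' = Der r' j ds'"
    and rule': "rule_inst r' (map concl ds') j" and valid': "\<forall>e\<in>set ds'. valid e"
    by (auto elim: valid.cases)
  from rule_inst_determined[OF "1.hyps" rule']
  have "r' = r" and prems: "map concl ds' = map concl ds" by auto
  have "ds' = ds"
  proof (rule nth_equalityI)
    show "length ds' = length ds"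
      using prems by (metis length_map)
    fix i assume "i < length ds'"
    moreover from this have "concl (ds' ! i) = concl (ds ! i)"
      using prems by (metis length_map nth_map)
    ultimately show "ds' ! i = ds ! i"
      using "1.IH" valid' \<open>length ds' = length ds\<close> by (metis nth_mem)
  qed
  with d' \<open>r' = r\<close> show ?case by simp
qed

theorem lemma2p4:
  assumes "derivable J"
  shows "\<exists>!d. valid d \<and> concl d = J"
  using assms valid_unique_by_concl unfolding derivable_def by metis

end
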